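(* Let $N=\{1,\dots,n\}$ with $n\ge 2$ and $\mathcal{D}=\mathbb{R}^n_+$. A rule $R:\mathcal{D}\to\mathbb{R}^n_+$ satisfies scale invariance, downstream impartiality, and upstream invariance if and only if there exists $\alpha=(\alpha_1,\dots,\alpha_{n-1})\in[0,1]^{n-1}$ such that for each $e\in\mathcal{D}$, $$R_i(e)=\alpha_i e_i+\sum_{k<i}\frac{(1-\alpha_k)e_k}{n-k}\quad (i=1,\dots,n-1),\qquad R_n(e)=e_n+\sum_{k<n}\frac{(1-\alpha_k)e_k}{n-k}.$$
   Context: Agents $1,\dots,n$ are located along a linear river, lower index meaning more upstream; agent $i$ has river inflow $e_i\ge 0$, and $e=(e_1,\dots,e_n)\in\mathcal{D}=\mathbb{R}^n_+$. An allocation for $e$ is $x\in\mathbb{R}^n_+$ with $\sum_{i=1}^n x_i=\sum_{i=1}^n e_i$ and $\sum_{i=1}^k x_i\le\sum_{i=1}^k e_i$ for each $k=1,\dots,n-1$. A rule is a map $R:\mathcal{D}\to\mathbb{R}^n_+$ assigning to each $e$ an allocation $R(e)$ for $e$. Axioms: Scale invariance: for each $e\in\mathcal{D}$ and each $\gamma\in\mathbb{R}_+$, $R(\gamma e)=\gamma R(e)$. Upstream invariance: for each $e,e'\in\mathcal{D}$ such that $e_i<e'_i$ for some $i\in N$ and $e_j=e'_j$ for all $j\ne i$, we have $R_k(e)=R_k(e')$ for each $k<i$. Downstream impartiality: for each $e,e'\in\mathcal{D}$ such that $e_i<e'_i$ for some $i\in N$ and $e_j=e'_j$ for all $j\ne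 i$, and for each $k,l>i$ with $e_k=e_l$, we have $R_k(e')-R_k(e)=R_l(e')-R_l(e)$. *)

theory Defs
  imports Complex_Main
begin

text \<open>Agents are 1..n. A profile in R^n_+ is modelled as a function nat => real that is
  nonnegative on {1..n} and zero outside {1..n}.\<close>

definition dom_D :: "nat \<Rightarrow> (nat \<Rightarrow> real) set" where
  "dom_D n = {e. (\<forall>i\<in>{1..n}. 0 \<le> e i) \<and> (\<forall>i. i \<notin> {1..n} \<longrightarrow> e i = 0)}"

definition is_allocation :: "nat \<Rightarrow> (nat \<Rightarrow> real) \<Rightarrow> (nat \<Rightarrow> real) \<Rightarrow> bool" where
  "is_allocation n e x \<longleftrightarrow>
     (\<forall>i\<in>{1..n}. 0 \<le> x i) \<and>
     (\<Sum>i=1..n. x i) = (\<Sum>i=1..n. e i) \<and>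
     (\<forall>k\<in>{1..n-1}. (\<Sum>i=1..k. x i) \<le> (\<Sum>i=1..k. e i))"

definition is_rule :: "nat \<Rightarrow> ((nat \<Rightarrow> real) \<Rightarrow> (nat \<Rightarrow> real)) \<Rightarrow> bool" where
  "is_rule n R \<longleftrightarrow> (\<forall>e\<in>dom_D n. is_allocation n e (R e))"

definition scale_invariance :: "nat \<Rightarrow> ((nat \<Rightarrow> real) \<Rightarrow> (nat \<Rightarrow> real)) \<Rightarrow> bool" where
  "scale_invariance n R \<longleftrightarrow>
     (\<forall>e\<in>dom_D n. \<forall>\<gamma>::real. 0 \<le> \<gamma> \<longrightarrow>
        (\<forall>i\<in>{1..n}. R (\<lambda>j. \<gamma> * e j) i = \<gamma> * R e i))"

definition upstream_invariance :: "nat \<Rightarrow> ((nat \<Rightarrow> real) \<Rightarrow> (nat \<Rightarrow> real)) \<Rightarrow> bool" where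
  "upstream_invariance n R \<longleftrightarrow>
     (\<forall>e\<in>dom_D n. \<forall>e'\<in>dom_D n. \<forall>i\<in>{1..n}.
        e i < e' i \<and> (\<forall>j\<in>{1..n}. j \<noteq> i \<longrightarrow> e j = e' j) \<longrightarrow>
        (\<forall>k\<in>{1..n}. k < i \<longrightarrow> R e k = R e' k))"

definition downstream_impartiality :: "nat \<Rightarrow> ((nat \<Rightarrow> real) \<Rightarrow> (nat \<Rightarrow> real)) \<Rightarrow> bool" where
  "downstream_impartiality n R \<longleftrightarrow>
     (\<forall>e\<in>dom_D n. \<forall>e'\<in>dom_D n. \<forall>i\<in>{1..n}.
        e i < e' i \<and> (\<forall>j\<in>{1..n}. j \<noteq> i \<longrightarrow> e j = e' j) \<longrightarrow>
        (\<forall>k\<in>{1..n}. \<forall>l\<in>{1..n}. i < k \<and> i < l \<and> e k = e l \<longrightarrow>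
           R e' k - R e k = R e' l - R e l))"

end

theory Submission
  imports Defs
begin

text \<open>Let \<open>\<alpha>\<^sub>k\<close> be the share agent \<open>k\<close> keeps of a unit inflow at \<open>k\<close>. By upstream invariance
  \<open>R\<^sub>i(e)\<close> depends only on \<open>e\<^sub>1, \<dots>, e\<^sub>i\<close>, so we may replace \<open>e\<close> by the profile \<open>w\<close> that
  agrees with \<open>e\<close> up to \<open>i\<close> and equals \<open>e\<^sub>i\<close> further downstream, and compare it with
  \<open>p\<close>, which is \<open>e\<^sub>i\<close> from \<open>i\<close> on and zero before; scale invariance gives
  \<open>R\<^sub>i(p) = \<alpha>\<^sub>i e\<^sub>i\<close>. Passing from \<open>p\<close> to \<open>w\<close> one upstream coordinate at a time,
  downstream impartiality makes all agents \<open>i, \<dots>, n\<close> gain the same amount, so by budget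
  balance each receives a \<open>1/(n - i + 1)\<close> part of what agents \<open>1, \<dots>, i - 1\<close> pass on
  in \<open>w\<close>; strong induction on \<open>i\<close> then yields the formula. Conversely, rules of this form
  are linear, \<open>R\<^sub>i\<close> involves only \<open>e\<^sub>1, \<dots>, e\<^sub>i\<close>, and a change of \<open>e\<^sub>k\<close> moves every
  downstream share by the same amount.\<close>

lemma dom_D_outside: "e \<in> dom_D n \<Longrightarrow> j \<notin> {1..n} \<Longrightarrow> e j = 0"
  unfolding dom_D_def by auto

lemma dom_D_nonneg: "e \<in> dom_D n \<Longrightarrow> 0 \<le> e j"
  unfolding dom_D_def by (cases "j \<in> {1..n}") auto

lemma dom_D_eqI: "e \<in> dom_D n \<Longrightarrow> e' \<in> dom_D n \<Longrightarrow> \<forall>j\<in>{1..n}. e j = e' j \<Longrightarrow> e = e'"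
  by (rule ext) (metis dom_D_outside)

text \<open>The profiles between \<open>e\<close> and \<open>e'\<close> are visited by switching the coordinates in \<open>J\<close>
  one at a time, so \<open>step\<close> may assume that its argument \<open>x\<close> still agrees with \<open>e\<close> outside \<open>J\<close>.\<close>

lemma dom_D_coordinatewise_invariant:
  fixes f :: "(nat \<Rightarrow> real) \<Rightarrow> 'a"
  assumes e: "e \<in> dom_D n" and e': "e' \<in> dom_D n"
    and agree: "\<forall>j\<in>{1..n}. j \<notin> J \<longrightarrow> e j = e' j"
    and step: "\<And>x y j. x \<in> dom_D n \<Longrightarrow> y \<in> dom_D n \<Longrightarrow> j \<in> J \<Longrightarrow> j \<in> {1..n} \<Longrightarrow>
      \<forall>l\<in>{1..n}. l \<noteq> j \<longrightarrow> x l = y l \<Longrightarrow> \<forall>l\<in>{1..n}. l \<notin> J \<longrightarrow> x l = e l \<Longrightarrow> f x = f y"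
  shows "f e = f e'"
proof -
  define g where "g m = (\<lambda>j. if j \<in> {1..m} then e' j else e j)" for m
  have g_dom: "g m \<in> dom_D n" for m
    using e e' unfolding g_def dom_D_def by auto
  have g_Suc: "g (Suc m) = (g m)(Suc m := e' (Suc m))" for m
    by (auto simp: g_def)
  have "f e = f (g m)" for m
  proof (induction m)
    case 0
    show ?case by (simp add: g_def)
  next
    case (Suc m)
    show ?case
    proof (cases "Suc m \<in> J \<and> Suc m \<le> n")
      case True
      have "f (g m) = f (g (Suc m))"
      proof (rule step[OF g_dom g_dom])
        show "Suc m \<in> J" "Suc m \<in> {1..n}" using True by auto
        show "\<forall>l\<in>{1..n}. l \<noteq> Suc m \<longrightarrow> g m l = g (Suc m) l" by (simp add: g_Suc)
        show "\<forall>l\<in>{1..n}. l \<notin> J \<longrightarrow> g m l = e l" using agree by (simp add: g_def)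
      qed
      with Suc.IH show ?thesis by simp
    next
      case False
      then have "e' (Suc m) = g m (Suc m)"
        using agree dom_D_outside[OF e] dom_D_outside[OF e'] by (auto simp: g_def)
      then have "g (Suc m) = g m" by (simp add: g_Suc)
      with Suc.IH show ?thesis by simp
    qed
  qed
  moreover have "g n = e'"
    by (rule dom_D_eqI[OF g_dom e']) (simp add: g_def)
  ultimately show ?thesis by metis
qed

lemma upstream_invariance_single:
  assumes "upstream_invariance n R" and e: "e \<in> dom_D n" and e': "e' \<in> dom_D n"
    and "i \<in> {1..n}" and agree: "\<forall>j\<in>{1..n}. j \<noteq> i \<longrightarrow> e j = e' j"
    and "k \<in> {1..n}" and "k < i"
  shows "R e k = R e' k"
proof (cases "e i" "e' i" rule: linorder_cases)
  case less
  with assms show ?thesis unfolding upstream_invariance_def by blast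
next
  case equal
  with agree have "e = e'" by (metis dom_D_eqI[OF e e'])
  then show ?thesis by simp
next
  case greater
  with assms have "R e' k = R e k" unfolding upstream_invariance_def by (metis (no_types, lifting))
  then show ?thesis by simp
qed

lemma downstream_impartiality_single:
  assumes "downstream_impartiality n R" and e: "e \<in> dom_D n" and e': "e' \<in> dom_D n"
    and "i \<in> {1..n}" and agree: "\<forall>j\<in>{1..n}. j \<noteq> i \<longrightarrow> e j = e' j"
    and "k \<in> {1..n}" "l \<in> {1..n}" "i < k" "i < l" "e k = e l"
  shows "R e' k - R e k = R e' l - R e l"
proof (cases "e i" "e' i" rule: linorder_cases)
  case less
  with assms show ?thesis unfolding downstream_impartiality_def by blast
next
  case equal
  with agree have "e = e'" by (metis dom_D_eqI[OF e e'])
  then show ?thesis by simp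
next
  case greater
  have "e' k = e' l" using assms by force
  with greater assms have "R e k - R e' k = R e l - R e' l"
    unfolding downstream_impartiality_def by (metis (no_types, lifting))
  then show ?thesis by simp
qed

lemma upstream_invariance_prefix:
  assumes ui: "upstream_invariance n R" and e: "e \<in> dom_D n" and e': "e' \<in> dom_D n"
    and k: "k \<in> {1..n}" and agree: "\<forall>j\<in>{1..k}. e j = e' j"
  shows "R e k = R e' k"
  using e e'
proof (rule dom_D_coordinatewise_invariant[where J = "{k<..}" and f = "\<lambda>x. R x k"])
  show "\<forall>j\<in>{1..n}. j \<notin> {k<..} \<longrightarrow> e j = e' j" using agree by auto
next
  fix x y j
  assume x: "x \<in> dom_D n" and y: "y \<in> dom_D n" and "j \<in> {k<..}" and j: "j \<in> {1..n}"
    and agree_off: "\<forall>l\<in>{1..n}. l \<noteq> j \<longrightarrow> x l = y l"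
  show "R x k = R y k"
    by (rule upstream_invariance_single[OF ui x y j agree_off k]) (use \<open>j \<in> {k<..}\<close> in simp)
qed

lemma downstream_impartiality_equal_gains:
  assumes di: "downstream_impartiality n R" and p: "p \<in> dom_D n" and w: "w \<in> dom_D n"
    and i: "i \<in> {1..n}" and flat: "\<forall>l\<in>{i..n}. p l = c \<and> w l = c" and l: "l \<in> {i..n}"
  shows "R w l - R p l = R w i - R p i"
proof -
  have "R p l - R p i = R w l - R w i"
    using p w
  proof (rule dom_D_coordinatewise_invariant[where J = "{..<i}" and f = "\<lambda>x. R x l - R x i"])
    show "\<forall>j\<in>{1..n}. j \<notin> {..<i} \<longrightarrow> p j = w j" using flat by auto
  next
    fix x y j
    assume x: "x \<in> dom_D n" and y: "y \<in> dom_D n" and "j \<in> {..<i}" and j: "j \<in> {1..n}"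
      and agree_off: "\<forall>l\<in>{1..n}. l \<noteq> j \<longrightarrow> x l = y l"
      and x_flat: "\<forall>l\<in>{1..n}. l \<notin> {..<i} \<longrightarrow> x l = p l"
    have "x l = x i" using x_flat flat i l by simp
    then have "R y l - R x l = R y i - R x i"
      using downstream_impartiality_single[OF di x y j agree_off] i l \<open>j \<in> {..<i}\<close> by simp
    then show "R x l - R x i = R y l - R y i" by simp
  qed
  then show ?thesis by simp
qed

text \<open>Agents \<open>i, \<dots>, n\<close> gain equally when passing from \<open>p\<close> to \<open>w\<close>, and by budget balance
  their total gain is what the agents upstream of \<open>i\<close> hand on.\<close>

lemma excess_shared_downstream:
  assumes rule: "is_rule n R" and di: "downstream_impartiality n R"
    and p: "p \<in> dom_D n" and w: "w \<in> dom_D n" and i: "i \<in> {1..n}"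
    and flat: "\<forall>l\<in>{i..n}. p l = c \<and> w l = c"
  shows "(real n + 1 - real i) * (R w i - R p i) = (\<Sum>l\<in>{1..<i}. (w l - R w l) - (p l - R p l))"
proof -
  have split: "(\<Sum>l\<in>{1..n}. f l) = (\<Sum>l\<in>{1..<i}. f l) + (\<Sum>l\<in>{i..n}. f l)" for f :: "nat \<Rightarrow> real"
  proof -
    have "{1..n} = {1..<i} \<union> {i..n}" using i by auto
    moreover have "{1..<i} \<inter> {i..n} = {}" by auto
    ultimately show ?thesis by (simp add: sum.union_disjoint)
  qed
  have budget: "(\<Sum>l\<in>{1..n}. R x l) = (\<Sum>l\<in>{1..n}. x l)" if "x \<in> dom_D n" for x
    using rule that unfolding is_rule_def is_allocation_def by blast
  have gain: "R w l = R p l + (R w i - R p i)" if "l \<in> {i..n}" for l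
    using downstream_impartiality_equal_gains[OF di p w i flat that] by simp
  have "(\<Sum>l\<in>{i..n}. R w l) = (\<Sum>l\<in>{i..n}. R p l + (R w i - R p i))"
    by (rule sum.cong[OF refl gain])
  also have "\<dots> = (\<Sum>l\<in>{i..n}. R p l) + (real n + 1 - real i) * (R w i - R p i)"
    using i by (simp add: sum.distrib of_nat_diff)
  finally have downstream: "(\<Sum>l\<in>{i..n}. R w l) = (\<Sum>l\<in>{i..n}. R p l) + (real n + 1 - real i) * (R w i - R p i)" .
  have "(\<Sum>l\<in>{i..n}. w l) = (\<Sum>l\<in>{i..n}. p l)"
    using flat by (intro sum.cong) auto
  with downstream budget[OF w] budget[OF p] split[of "R w"] split[of w] split[of "R p"] split[of p]
  show ?thesis unfolding sum_subtractf by linarith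
qed

definition upstream_transfer :: "nat \<Rightarrow> (nat \<Rightarrow> real) \<Rightarrow> (nat \<Rightarrow> real) \<Rightarrow> nat \<Rightarrow> real" where
  "upstream_transfer n \<alpha> e i = (\<Sum>k\<in>{1..<i}. (1 - \<alpha> k) * e k / (real n - real k))"

lemma upstream_transfer_cong:
  "\<forall>k\<in>{1..<i}. e k = e' k \<Longrightarrow> upstream_transfer n \<alpha> e i = upstream_transfer n \<alpha> e' i"
  unfolding upstream_transfer_def by (intro sum.cong) auto

lemma upstream_transfer_scale:
  "upstream_transfer n \<alpha> (\<lambda>j. \<gamma> * e j) i = \<gamma> * upstream_transfer n \<alpha> e i"
  unfolding upstream_transfer_def by (simp add: sum_distrib_left algebra_simps)

lemma upstream_transfer_single_change:
  assumes agree: "\<forall>j. j \<noteq> i \<longrightarrow> e j = e' j" and "1 \<le> i" "i < m"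
  shows "upstream_transfer n \<alpha> e' m - upstream_transfer n \<alpha> e m = (1 - \<alpha> i) * (e' i - e i) / (real n - real i)"
proof -
  have "upstream_transfer n \<alpha> e' m - upstream_transfer n \<alpha> e m
      = (\<Sum>k\<in>{1..<m}. if k = i then (1 - \<alpha> i) * (e' i - e i) / (real n - real i) else 0)"
    unfolding upstream_transfer_def sum_subtractf[symmetric]
    using agree by (intro sum.cong) (auto simp: diff_divide_distrib right_diff_distrib)
  then show ?thesis using assms by simp
qed

lemma sum_weighted_minus_partial_sums:
  fixes t :: "nat \<Rightarrow> real"
  shows "(\<Sum>l\<in>{1..<i}. (real n - real l) * t l - (\<Sum>k\<in>{1..<l}. t k))
    = (real n + 1 - real i) * (\<Sum>k\<in>{1..<i}. t k)"
proof (induction i)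
  case (Suc i)
  then show ?case by (cases "i = 0") (simp_all add: algebra_simps)
qed simp

definition transfer_form ::
    "nat \<Rightarrow> ((nat \<Rightarrow> real) \<Rightarrow> nat \<Rightarrow> real) \<Rightarrow> (nat \<Rightarrow> real) \<Rightarrow> (nat \<Rightarrow> real) \<Rightarrow> bool" where
  "transfer_form n R \<beta> \<alpha> \<longleftrightarrow>
     (\<forall>e\<in>dom_D n. \<forall>i\<in>{1..n}. R e i = \<beta> i * e i + upstream_transfer n \<alpha> e i)"

definition unit_inflow :: "nat \<Rightarrow> nat \<Rightarrow> real" where
  "unit_inflow k = (\<lambda>j. if j = k then 1 else 0)"

definition own_share :: "((nat \<Rightarrow> real) \<Rightarrow> nat \<Rightarrow> real) \<Rightarrow> nat \<Rightarrow> real" where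
  "own_share R k = R (unit_inflow k) k"

lemma unit_inflow_dom_D: "k \<in> {1..n} \<Longrightarrow> unit_inflow k \<in> dom_D n"
  unfolding unit_inflow_def dom_D_def by auto

lemma rule_vanishes_above_dry_prefix:
  assumes rule: "is_rule n R" and ui: "upstream_invariance n R"
    and e: "e \<in> dom_D n" and l: "l \<in> {1..n}" and dry: "\<forall>j\<in>{1..l}. e j = 0"
  shows "R e l = 0"
proof -
  have zero: "(\<lambda>_. 0) \<in> dom_D n" unfolding dom_D_def by simp
  have "\<forall>j\<in>{1..n}. 0 \<le> R (\<lambda>_. 0) j" and "(\<Sum>j\<in>{1..n}. R (\<lambda>_. 0) j) = 0"
    using rule zero unfolding is_rule_def is_allocation_def by auto
  then have "R (\<lambda>_. 0) l = 0" using l sum_nonneg_eq_0_iff[of "{1..n}" "R (\<lambda>_. 0)"] by simp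
  moreover have "R e l = R (\<lambda>_. 0) l" using upstream_invariance_prefix[OF ui e zero l] dry by simp
  ultimately show ?thesis by simp
qed

lemma own_share_eq_prefix_sum:
  assumes rule: "is_rule n R" and ui: "upstream_invariance n R" and k: "k \<in> {1..n}"
  shows "own_share R k = (\<Sum>l\<in>{1..k}. R (unit_inflow k) l)"
proof -
  have "(\<Sum>l\<in>{1..<k}. R (unit_inflow k) l) = 0"
    using rule_vanishes_above_dry_prefix[OF rule ui unit_inflow_dom_D[OF k]] k
    by (intro sum.neutral) (auto simp: unit_inflow_def)
  moreover have "{1..k} = insert k {1..<k}" using k by auto
  ultimately show ?thesis unfolding own_share_def by simp
qed

lemma own_share_bounds:
  assumes rule: "is_rule n R" and ui: "upstream_invariance n R" and k: "k \<in> {1..n-1}"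
  shows "0 \<le> own_share R k \<and> own_share R k \<le> 1"
proof -
  have kn: "k \<in> {1..n}" using k by auto
  have "(\<Sum>l\<in>{1..k}. R (unit_inflow k) l) \<le> (\<Sum>l\<in>{1..k}. unit_inflow k l)"
    and "0 \<le> R (unit_inflow k) k"
    using rule unit_inflow_dom_D[OF kn] k unfolding is_rule_def is_allocation_def by auto
  moreover have "(\<Sum>l\<in>{1..k}. unit_inflow k l) = 1" using kn by (simp add: unit_inflow_def)
  ultimately show ?thesis using own_share_eq_prefix_sum[OF rule ui kn] by (simp add: own_share_def)
qed

lemma own_share_last:
  assumes rule: "is_rule n R" and ui: "upstream_invariance n R" and n: "1 \<le> n"
  shows "own_share R n = 1"
proof -
  have nn: "n \<in> {1..n}" using n by simp
  have "(\<Sum>l\<in>{1..n}. R (unit_inflow n) l) = (\<Sum>l\<in>{1..n}. unit_inflow n l)"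
    using rule unit_inflow_dom_D[OF nn] unfolding is_rule_def is_allocation_def by auto
  also have "\<dots> = 1" using nn by (simp add: unit_inflow_def)
  finally show ?thesis using own_share_eq_prefix_sum[OF rule ui nn] by simp
qed

lemma rule_eq_own_share_plus_transfer:
  assumes rule: "is_rule n R" and si: "scale_invariance n R"
    and di: "downstream_impartiality n R" and ui: "upstream_invariance n R"
    and "i \<in> {1..n}" and "e \<in> dom_D n"
  shows "R e i = own_share R i * e i + upstream_transfer n (own_share R) e i"
  using assms(5,6)
proof (induction i arbitrary: e rule: less_induct)
  case (less i)
  let ?\<alpha> = "own_share R"
  note i = less.prems(1) and e = less.prems(2)
  define w where "w j = (if j < i then e j else if j \<le> n then e i else 0)" for j
  define p where "p j = (if i \<le> j \<and> j \<le> n then e i else 0)" for j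
  have w: "w \<in> dom_D n" and p: "p \<in> dom_D n"
    using e dom_D_nonneg[OF e] i unfolding w_def p_def dom_D_def by auto
  have "R e i = R w i"
    by (rule upstream_invariance_prefix[OF ui e w i]) (use i in \<open>auto simp: w_def\<close>)
  moreover have "R p i = ?\<alpha> i * e i"
  proof -
    have scaled: "(\<lambda>j. e i * unit_inflow i j) \<in> dom_D n"
      using dom_D_nonneg[OF e] i unfolding unit_inflow_def dom_D_def by auto
    have "R p i = R (\<lambda>j. e i * unit_inflow i j) i"
      by (rule upstream_invariance_prefix[OF ui p scaled i]) (use i in \<open>auto simp: p_def unit_inflow_def\<close>)
    also have "\<dots> = e i * ?\<alpha> i"
      using si unit_inflow_dom_D[OF i] dom_D_nonneg[OF e] i
      unfolding scale_invariance_def own_share_def by blast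
    finally show ?thesis by simp
  qed
  moreover have "R w i - R p i = upstream_transfer n ?\<alpha> e i"
  proof -
    define t where "t k = (1 - ?\<alpha> k) * e k / (real n - real k)" for k
    have transfer_t: "upstream_transfer n ?\<alpha> e j = (\<Sum>k\<in>{1..<j}. t k)" for j
      by (simp add: t_def upstream_transfer_def)
    have upstream: "(w l - R w l) - (p l - R p l) = (real n - real l) * t l - (\<Sum>k\<in>{1..<l}. t k)"
      if l: "l \<in> {1..<i}" for l
    proof -
      have "w l = e l" and "upstream_transfer n ?\<alpha> w l = upstream_transfer n ?\<alpha> e l"
        using l by (auto simp: w_def intro: upstream_transfer_cong)
      moreover have "R w l = ?\<alpha> l * w l + upstream_transfer n ?\<alpha> w l"
        using less.IH[OF _ _ w] i l by simp
      moreover have "p l = 0" and "R p l = 0"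
        using rule_vanishes_above_dry_prefix[OF rule ui p] i l by (auto simp: p_def)
      moreover have "(real n - real l) * t l = e l - ?\<alpha> l * e l"
      proof -
        have "real n - real l \<noteq> 0" using i l by simp
        then have "(real n - real l) * t l = (1 - ?\<alpha> l) * e l" by (simp add: t_def)
        then show ?thesis by (simp add: algebra_simps)
      qed
      ultimately show ?thesis unfolding transfer_t by simp
    qed
    have "(real n + 1 - real i) * (R w i - R p i) = (\<Sum>l\<in>{1..<i}. (w l - R w l) - (p l - R p l))"
      by (rule excess_shared_downstream[OF rule di p w i]) (auto simp: w_def p_def)
    also have "\<dots> = (\<Sum>l\<in>{1..<i}. (real n - real l) * t l - (\<Sum>k\<in>{1..<l}. t k))"
      using upstream by (rule sum.cong[OF refl])
    also have "\<dots> = (real n + 1 - real i) * upstream_transfer n ?\<alpha> e i"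
      unfolding transfer_t by (rule sum_weighted_minus_partial_sums)
    finally show ?thesis using i by simp
  qed
  ultimately show ?case by simp
qed

lemma transfer_form_scale_invariance:
  assumes "transfer_form n R \<beta> \<alpha>"
  shows "scale_invariance n R"
  unfolding scale_invariance_def
proof (intro ballI allI impI)
  fix e and \<gamma> :: real and i
  assume e: "e \<in> dom_D n" and \<gamma>: "0 \<le> \<gamma>" and i: "i \<in> {1..n}"
  have "(\<lambda>j. \<gamma> * e j) \<in> dom_D n" using e \<gamma> unfolding dom_D_def by auto
  then show "R (\<lambda>j. \<gamma> * e j) i = \<gamma> * R e i"
    using assms e i unfolding transfer_form_def by (simp add: upstream_transfer_scale algebra_simps)
qed

lemma transfer_form_downstream_impartiality:
  assumes "transfer_form n R \<beta> \<alpha>"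
  shows "downstream_impartiality n R"
  unfolding downstream_impartiality_def
proof (intro ballI allI impI)
  fix e e' i k l
  assume e: "e \<in> dom_D n" and e': "e' \<in> dom_D n" and "i \<in> {1..n}"
    and change: "e i < e' i \<and> (\<forall>j\<in>{1..n}. j \<noteq> i \<longrightarrow> e j = e' j)"
    and "k \<in> {1..n}" "l \<in> {1..n}" "i < k \<and> i < l \<and> e k = e l"
  moreover have "\<forall>j. j \<noteq> i \<longrightarrow> e j = e' j"
    using change dom_D_outside[OF e] dom_D_outside[OF e'] by metis
  ultimately show "R e' k - R e k = R e' l - R e l"
    using assms upstream_transfer_single_change[of i e e'] unfolding transfer_form_def by auto
qed

lemma transfer_form_upstream_invariance:
  assumes "transfer_form n R \<beta> \<alpha>"
  shows "upstream_invariance n R"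
  unfolding upstream_invariance_def
proof (intro ballI allI impI)
  fix e e' i k
  assume "e \<in> dom_D n" "e' \<in> dom_D n" "i \<in> {1..n}"
    and change: "e i < e' i \<and> (\<forall>j\<in>{1..n}. j \<noteq> i \<longrightarrow> e j = e' j)" and "k \<in> {1..n}" "k < i"
  moreover have "upstream_transfer n \<alpha> e k = upstream_transfer n \<alpha> e' k"
    using change \<open>k < i\<close> \<open>k \<in> {1..n}\<close> by (intro upstream_transfer_cong) auto
  ultimately show "R e k = R e' k" using assms unfolding transfer_form_def by auto
qed

lemma transfer_form_iff:
  assumes "1 \<le> n"
  shows "transfer_form n R (\<alpha>(n := 1)) \<alpha> \<longleftrightarrow>
    (\<forall>e\<in>dom_D n.
       (\<forall>i\<in>{1..n-1}. R e i = \<alpha> i * e i + (\<Sum>k\<in>{1..<i}. (1 - \<alpha> k) * e k / (real n - real k))) \<and>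
       R e n = e n + (\<Sum>k\<in>{1..<n}. (1 - \<alpha> k) * e k / (real n - real k)))"
proof -
  have "{1..n} = insert n {1..n-1}" using assms by auto
  then show ?thesis unfolding transfer_form_def upstream_transfer_def by auto
qed

theorem theorem4:
  fixes n :: nat and R :: "(nat \<Rightarrow> real) \<Rightarrow> (nat \<Rightarrow> real)"
  assumes "2 \<le> n" and "is_rule n R"
  shows "(scale_invariance n R \<and> downstream_impartiality n R \<and> upstream_invariance n R) \<longleftrightarrow>
    (\<exists>\<alpha> :: nat \<Rightarrow> real. (\<forall>k\<in>{1..n-1}. 0 \<le> \<alpha> k \<and> \<alpha> k \<le> 1) \<and>
      (\<forall>e\<in>dom_D n.
         (\<forall>i\<in>{1..n-1}. R e i = \<alpha> i * e i +
             (\<Sum>k\<in>{1..<i}. (1 - \<alpha> k) * e k / (real n - real k))) \<and>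
         R e n = e n + (\<Sum>k\<in>{1..<n}. (1 - \<alpha> k) * e k / (real n - real k))))"
  unfolding transfer_form_iff[symmetric, OF order.trans[OF one_le_numeral assms(1)]]
proof
  assume axioms: "scale_invariance n R \<and> downstream_impartiality n R \<and> upstream_invariance n R"
  have "(own_share R)(n := 1) = own_share R"
    using own_share_last[OF assms(2)] axioms assms(1) by auto
  moreover have "\<forall>k\<in>{1..n-1}. 0 \<le> own_share R k \<and> own_share R k \<le> 1"
    using own_share_bounds[OF assms(2)] axioms by blast
  moreover have "transfer_form n R (own_share R) (own_share R)"
    using rule_eq_own_share_plus_transfer[OF assms(2)] axioms unfolding transfer_form_def by blast
  ultimately show "\<exists>\<alpha>. (\<forall>k\<in>{1..n-1}. 0 \<le> \<alpha> k \<and> \<alpha> k \<le> 1) \<and> transfer_form n R (\<alpha>(n := 1)) \<alpha>"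
    by (intro exI[of _ "own_share R"]) simp
next
  assume "\<exists>\<alpha>. (\<forall>k\<in>{1..n-1}. 0 \<le> \<alpha> k \<and> \<alpha> k \<le> 1) \<and> transfer_form n R (\<alpha>(n := 1)) \<alpha>"
  then obtain \<alpha> where "transfer_form n R (\<alpha>(n := 1)) \<alpha>" by blast
  then show "scale_invariance n R \<and> downstream_impartiality n R \<and> upstream_invariance n R"
    using transfer_form_scale_invariance transfer_form_downstream_impartiality
      transfer_form_upstream_invariance by blast
qed

end
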